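(* Let $m$ be a positive integer and let $\Delta$ be a $(d-1)$-dimensional balanced simplicial complex (coloring $\kappa:V(\Delta)\to[d]$) that is $m$-Buchsbaum* over $\mathbf{k}$. Then for every nonempty proper subset $S\subsetneq[d]$, the rank-selected subcomplex $\Delta_S$ is $m$-Buchsbaum* over $\mathbf{k}$.
   Context: All complexes are finite; homology is reduced with coefficients in a fixed field $\mathbf{k}$. $\mathrm{lk}_\Delta(F)=\{\sigma\in\Delta:\sigma\cap F=\emptyset,\sigma\cup F\in\Delta\}$; for $A\subseteq V(\Delta)$, $\Delta-A$ is the induced subcomplex on $V(\Delta)\setminus A$. A $(d-1)$-dimensional complex is Buchsbaum over $\mathbf{k}$ if it is pure and for every nonempty face $F$, $\widetilde H_j(\mathrm{lk}_\Delta F)=0$ for $j<d-1-|F|$. A $(d-1)$-dimensional Buchsbaum complex $\Delta$ is Buchsbaum* over $\mathbf{k}$ if for every $p\in|\Delta|$ the canonical map $\widetilde H_{d-1}(|\Delta|)\to\widetilde H_{d-1}(|\Delta|,|\Delta|-p)$ is surjective. $\Delta$ is $m$-Buchsbaum* if $\Delta$ is Buchsbaum and $\Delta-A$ is Buchsbaum* of dimension $d-1$ for every $A\subseteq V(\Delta)$ with $|A|<m$. $\Delta$ is balanced if there is $\kappa:V(\Delta)\to[d]$ with $\kappa(u)\ne\kappa(v)$ for every edge $\{u,v\}$; $\Delta_S=\{\tau\in\Delta:\kappa(\tau)\subseteq S\}$. *)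

theory Defs
  imports Main
begin

text \<open>Finite abstract simplicial complexes on a vertex type 'v; faces are finite vertex sets.
  The empty face belongs to every nonempty complex (reduced homology).\<close>

definition simplicial_complex :: "'v set set \<Rightarrow> bool" where
  "simplicial_complex \<Delta> \<longleftrightarrow> finite \<Delta> \<and> (\<forall>\<sigma>\<in>\<Delta>. \<forall>\<tau>. \<tau> \<subseteq> \<sigma> \<longrightarrow> \<tau> \<in> \<Delta>)"

definition vertices :: "'v set set \<Rightarrow> 'v set" where
  "vertices \<Delta> = \<Union>\<Delta>"

text \<open>dim_card = dimension + 1 = maximal face cardinality.\<close>
definition dim_card :: "'v set set \<Rightarrow> nat" where
  "dim_card \<Delta> = Max (card ` \<Delta>)"

definition pure :: "'v set set \<Rightarrow> bool" where
  "pure \<Delta> \<longleftrightarrow> (\<forall>\<sigma>\<in>\<Delta>. \<exists>\<tau>\<in>\<Delta>. \<sigma> \<subseteq> \<tau> \<and> card \<tau> = dim_card \<Delta>)"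

definition link :: "'v set set \<Rightarrow> 'v set \<Rightarrow> 'v set set" where
  "link \<Delta> F = {\<sigma>\<in>\<Delta>. \<sigma> \<inter> F = {} \<and> \<sigma> \<union> F \<in> \<Delta>}"

definition delete_vertices :: "'v set set \<Rightarrow> 'v set \<Rightarrow> 'v set set" where
  "delete_vertices \<Delta> A = {\<sigma>\<in>\<Delta>. \<sigma> \<inter> A = {}}"

definition cost :: "'v set set \<Rightarrow> 'v set \<Rightarrow> 'v set set" where
  "cost \<Delta> F = {\<sigma>\<in>\<Delta>. \<not> F \<subseteq> \<sigma>}"

text \<open>Simplicial chains with coefficients in a field 'k, oriented by the linear order on 'v.
  A chain is a function from faces to 'k; "card index" n corresponds to homological degree n-1
  (n = 0 is the empty face, giving reduced homology).\<close>

definition bd_sign :: "'v::linorder set \<Rightarrow> 'v \<Rightarrow> 'k::field" where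
  "bd_sign \<sigma> v = (-1) ^ card {u\<in>\<sigma>. u < v}"

definition boundary :: "'v::linorder set set \<Rightarrow> ('v set \<Rightarrow> 'k::field) \<Rightarrow> 'v set \<Rightarrow> 'k" where
  "boundary \<Delta> c \<tau> = (\<Sum>v\<in>{v. v \<notin> \<tau> \<and> insert v \<tau> \<in> \<Delta>}. bd_sign (insert v \<tau>) v * c (insert v \<tau>))"

definition chain_on :: "'v set set \<Rightarrow> nat \<Rightarrow> ('v set \<Rightarrow> 'k::zero) \<Rightarrow> bool" where
  "chain_on X n c \<longleftrightarrow> (\<forall>\<sigma>. c \<sigma> \<noteq> 0 \<longrightarrow> \<sigma> \<in> X \<and> card \<sigma> = n)"

definition rel_cycle :: "'k::field itself \<Rightarrow> 'v::linorder set set \<Rightarrow> 'v set set \<Rightarrow> nat \<Rightarrow> ('v set \<Rightarrow> 'k) \<Rightarrow> bool" where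
  "rel_cycle K \<Delta> \<Gamma> n z \<longleftrightarrow> chain_on (\<Delta> - \<Gamma>) n z \<and> (\<forall>\<tau>. \<tau> \<notin> \<Gamma> \<longrightarrow> boundary \<Delta> z \<tau> = 0)"

definition rel_boundary :: "'k::field itself \<Rightarrow> 'v::linorder set set \<Rightarrow> 'v set set \<Rightarrow> nat \<Rightarrow> ('v set \<Rightarrow> 'k) \<Rightarrow> bool" where
  "rel_boundary K \<Delta> \<Gamma> n z \<longleftrightarrow>
     (\<exists>b::'v set \<Rightarrow> 'k. chain_on (\<Delta> - \<Gamma>) (Suc n) b \<and> (\<forall>\<tau>. \<tau> \<notin> \<Gamma> \<longrightarrow> z \<tau> = boundary \<Delta> b \<tau>))"

text \<open>Reduced homology of Delta in degree n-1 vanishes (every cycle is a boundary).\<close>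
definition homology_vanishes :: "'k::field itself \<Rightarrow> 'v::linorder set set \<Rightarrow> nat \<Rightarrow> bool" where
  "homology_vanishes K \<Delta> n \<longleftrightarrow> (\<forall>z::'v set \<Rightarrow> 'k. rel_cycle K \<Delta> {} n z \<longrightarrow> rel_boundary K \<Delta> {} n z)"

text \<open>The canonical map H_{n-1}(Delta) -> H_{n-1}(Delta, Gamma) is surjective.\<close>
definition homology_map_surj :: "'k::field itself \<Rightarrow> 'v::linorder set set \<Rightarrow> 'v set set \<Rightarrow> nat \<Rightarrow> bool" where
  "homology_map_surj K \<Delta> \<Gamma> n \<longleftrightarrow>
     (\<forall>z::'v set \<Rightarrow> 'k. rel_cycle K \<Delta> \<Gamma> n z \<longrightarrow>
        (\<exists>c. rel_cycle K \<Delta> {} n c \<and> rel_boundary K \<Delta> \<Gamma> n (\<lambda>\<tau>. if \<tau> \<in> \<Gamma> then 0 else z \<tau> - c \<tau>)))"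

definition buchsbaum :: "'k::field itself \<Rightarrow> 'v::linorder set set \<Rightarrow> bool" where
  "buchsbaum K \<Delta> \<longleftrightarrow> \<Delta> \<noteq> {} \<and> pure \<Delta> \<and>
     (\<forall>F\<in>\<Delta>. F \<noteq> {} \<longrightarrow> (\<forall>n < dim_card \<Delta> - card F. homology_vanishes K (link \<Delta> F) n))"

text \<open>Buchsbaum*: for every point p of |Delta|, lying in the relative interior of a nonempty face F,
  H(|Delta|,|Delta|-p) is modelled simplicially by H(Delta, cost Delta F).\<close>
definition buchsbaum_star :: "'k::field itself \<Rightarrow> 'v::linorder set set \<Rightarrow> bool" where
  "buchsbaum_star K \<Delta> \<longleftrightarrow> buchsbaum K \<Delta> \<and>
     (\<forall>F\<in>\<Delta>. F \<noteq> {} \<longrightarrow> homology_map_surj K \<Delta> (cost \<Delta> F) (dim_card \<Delta>))"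

definition m_buchsbaum_star :: "'k::field itself \<Rightarrow> nat \<Rightarrow> 'v::linorder set set \<Rightarrow> bool" where
  "m_buchsbaum_star K m \<Delta> \<longleftrightarrow> buchsbaum K \<Delta> \<and>
     (\<forall>A. A \<subseteq> vertices \<Delta> \<and> card A < m \<longrightarrow>
        buchsbaum_star K (delete_vertices \<Delta> A) \<and> dim_card (delete_vertices \<Delta> A) = dim_card \<Delta>)"

definition balanced :: "'v set set \<Rightarrow> nat \<Rightarrow> ('v \<Rightarrow> nat) \<Rightarrow> bool" where
  "balanced \<Delta> d \<kappa> \<longleftrightarrow> (\<forall>v\<in>vertices \<Delta>. \<kappa> v \<in> {1..d}) \<and>
     (\<forall>u v. {u, v} \<in> \<Delta> \<and> u \<noteq> v \<longrightarrow> \<kappa> u \<noteq> \<kappa> v)"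

definition rank_selected :: "'v set set \<Rightarrow> ('v \<Rightarrow> nat) \<Rightarrow> nat set \<Rightarrow> 'v set set" where
  "rank_selected \<Delta> \<kappa> S = {\<tau>\<in>\<Delta>. \<kappa> ` \<tau> \<subseteq> S}"

end

theory Submission
  imports Defs
begin

text \<open>Rank selection removes one colour at a time, and rank selection commutes with
  deleting vertices, so it suffices that deleting the colour class W of one colour from a balanced
  Buchsbaum* complex \<Delta> leaves a Buchsbaum* complex of one dimension less. W meets every face
  at most once, and every facet exactly once.

  Links of \<Delta>' = \<Delta> - W are links of \<Delta> with W deleted. A cycle there bounds a chain b in the
  link in \<Delta>; contracting b at a vertex w \<in> W gives a cycle of a deeper link, which bounds by the
  Buchsbaum property, and this filling repairs b into a chain avoiding W.

  The relative homology of (\<Delta>, cost F) is the shifted homology of the link of F. A top relative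
  cycle z of (\<Delta>', cost F) therefore bounds some b in (\<Delta>, cost F). For w \<in> W, the part of b on
  the star of F \<union> {w} is a top relative cycle of (\<Delta>, cost (F \<union> {w})), so by Buchsbaum* it agrees
  there with an absolute cycle c_w; summing the contractions of the c_w at w gives an absolute
  cycle of \<Delta>' that equals z off cost F.\<close>

section \<open>Simplicial complexes\<close>

lemma simplicial_complexD:
  "simplicial_complex \<Delta> \<Longrightarrow> \<sigma> \<in> \<Delta> \<Longrightarrow> \<tau> \<subseteq> \<sigma> \<Longrightarrow> \<tau> \<in> \<Delta>"
  unfolding simplicial_complex_def by blast

lemma simplicial_complex_finite_vertices:
  assumes "simplicial_complex \<Delta>" shows "finite (\<Union>\<Delta>)"
proof -
  have "finite \<sigma>" if "\<sigma> \<in> \<Delta>" for \<sigma>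
  proof -
    have "Pow \<sigma> \<subseteq> \<Delta>" using simplicial_complexD[OF assms that] by blast
    then have "finite (Pow \<sigma>)"
      using assms finite_subset unfolding simplicial_complex_def by blast
    then show ?thesis by simp
  qed
  then show ?thesis using assms unfolding simplicial_complex_def by (simp add: finite_Union)
qed

lemma simplicial_complex_finite_face:
  "simplicial_complex \<Delta> \<Longrightarrow> \<sigma> \<in> \<Delta> \<Longrightarrow> finite \<sigma>"
  by (meson Union_upper finite_subset simplicial_complex_finite_vertices)

lemma simplicial_complex_link:
  assumes "simplicial_complex \<Delta>" shows "simplicial_complex (link \<Delta> F)"
  unfolding simplicial_complex_def
proof (intro conjI ballI allI impI)
  show "finite (link \<Delta> F)"
    using assms unfolding simplicial_complex_def link_def by simp
next
  fix \<sigma> \<tau> assume "\<sigma> \<in> link \<Delta> F" and \<tau>: "\<tau> \<subseteq> \<sigma>"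
  then have "\<sigma> \<in> \<Delta>" "\<sigma> \<inter> F = {}" "\<sigma> \<union> F \<in> \<Delta>"
    unfolding link_def by simp_all
  moreover have "\<tau> \<union> F \<subseteq> \<sigma> \<union> F" using \<tau> by blast
  ultimately show "\<tau> \<in> link \<Delta> F"
    unfolding link_def using \<tau> simplicial_complexD[OF assms] by blast
qed

lemma simplicial_complex_delete_vertices:
  "simplicial_complex \<Delta> \<Longrightarrow> simplicial_complex (delete_vertices \<Delta> A)"
  unfolding simplicial_complex_def delete_vertices_def by auto

lemma simplicial_complex_rank_selected:
  "simplicial_complex \<Delta> \<Longrightarrow> simplicial_complex (rank_selected \<Delta> \<kappa> S)"
  unfolding simplicial_complex_def rank_selected_def by (auto simp: image_subset_iff)

lemma link_insert:
  assumes "simplicial_complex \<Delta>" "v \<notin> F"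
  shows "link (link \<Delta> F) {v} = link \<Delta> (insert v F)"
proof (intro set_eqI iffI)
  fix \<sigma> assume "\<sigma> \<in> link (link \<Delta> F) {v}"
  then have "\<sigma> \<in> \<Delta>" "v \<notin> \<sigma>" "\<sigma> \<inter> F = {}" "insert v \<sigma> \<union> F \<in> \<Delta>"
    unfolding link_def by simp_all
  then show "\<sigma> \<in> link \<Delta> (insert v F)"
    unfolding link_def by simp
next
  fix \<sigma> assume "\<sigma> \<in> link \<Delta> (insert v F)"
  then have "\<sigma> \<in> \<Delta>" "v \<notin> \<sigma>" "\<sigma> \<inter> F = {}" and vF: "insert v \<sigma> \<union> F \<in> \<Delta>"
    unfolding link_def by simp_all
  moreover have "\<sigma> \<union> F \<in> \<Delta>" "insert v \<sigma> \<in> \<Delta>"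
    using simplicial_complexD[OF assms(1) vF] by blast+
  ultimately show "\<sigma> \<in> link (link \<Delta> F) {v}"
    using assms(2) unfolding link_def by simp
qed

lemma link_eq_empty: "simplicial_complex \<Delta> \<Longrightarrow> G \<notin> \<Delta> \<Longrightarrow> link \<Delta> G = {}"
  unfolding link_def by (blast dest: simplicial_complexD)

lemma delete_vertices_empty [simp]: "delete_vertices \<Delta> {} = \<Delta>"
  unfolding delete_vertices_def by simp

lemma cost_empty [simp]: "cost \<Delta> {} = {}"
  unfolding cost_def by simp

lemma rank_selected_delete_vertices:
  "rank_selected (delete_vertices \<Delta> A) \<kappa> S = delete_vertices (rank_selected \<Delta> \<kappa> S) A"
  unfolding rank_selected_def delete_vertices_def by blast

lemma rank_selected_rank_selected:
  "T \<subseteq> S \<Longrightarrow> rank_selected (rank_selected \<Delta> \<kappa> S) \<kappa> T = rank_selected \<Delta> \<kappa> T"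
  unfolding rank_selected_def by blast

lemma vertices_delete_vertices_subset: "vertices (delete_vertices \<Delta> A) \<subseteq> vertices \<Delta>"
  unfolding vertices_def delete_vertices_def by auto

lemma vertices_rank_selected_subset: "vertices (rank_selected \<Delta> \<kappa> S) \<subseteq> vertices \<Delta>"
  unfolding vertices_def rank_selected_def by auto

section \<open>Chains and boundaries\<close>

lemma chain_onD: "chain_on X n c \<Longrightarrow> c \<sigma> \<noteq> 0 \<Longrightarrow> \<sigma> \<in> X \<and> card \<sigma> = n"
  unfolding chain_on_def by blast

lemma chain_on_zero_if_no_faces:
  assumes "chain_on X n c" "\<forall>\<sigma>\<in>X. card \<sigma> < n" shows "c = (\<lambda>_. 0)"
  using assms unfolding chain_on_def by fastforce

lemma boundary_zero [simp]: "boundary \<Gamma> (\<lambda>_. 0) \<tau> = 0"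
  unfolding boundary_def by simp

lemma homology_vanishes_empty: "homology_vanishes K {} n"
  unfolding homology_vanishes_def rel_cycle_def rel_boundary_def chain_on_def boundary_def
  by (auto intro: exI[of _ "\<lambda>_. 0"])

lemma homology_vanishesE:
  fixes K :: "'k::field itself" and z :: "'v::linorder set \<Rightarrow> 'k"
  assumes "homology_vanishes K \<Gamma> n" "chain_on \<Gamma> n z" "\<And>\<tau>. boundary \<Gamma> z \<tau> = 0"
  obtains b where "chain_on \<Gamma> (Suc n) b" "\<And>\<tau>. z \<tau> = boundary \<Gamma> b \<tau>"
proof -
  have "rel_cycle K \<Gamma> {} n z" using assms(2,3) unfolding rel_cycle_def by simp
  then show thesis using assms(1) that unfolding homology_vanishes_def rel_boundary_def by auto
qed

text \<open>The boundary formula over an ambient vertex set rather than over the faces of a complex,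
  so that boundaries taken in different subcomplexes can be compared.\<close>

definition boundary_in :: "'v::linorder set \<Rightarrow> ('v set \<Rightarrow> 'k::field) \<Rightarrow> 'v set \<Rightarrow> 'k" where
  "boundary_in V c \<tau> = (\<Sum>v\<in>V - \<tau>. bd_sign (insert v \<tau>) v * c (insert v \<tau>))"

lemma boundary_eq_boundary_in:
  assumes "finite V" "\<Union>\<Gamma> \<subseteq> V" "\<And>\<sigma>. c \<sigma> \<noteq> 0 \<Longrightarrow> \<sigma> \<in> \<Gamma>"
  shows "boundary \<Gamma> c \<tau> = boundary_in V c \<tau>"
  unfolding boundary_def boundary_in_def
proof (rule sum.mono_neutral_cong_left)
  show "{v. v \<notin> \<tau> \<and> insert v \<tau> \<in> \<Gamma>} \<subseteq> V - \<tau>" using assms(2) by blast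
qed (use assms in auto)

lemma boundary_in_add: "boundary_in V (\<lambda>\<sigma>. f \<sigma> + g \<sigma>) \<tau> = boundary_in V f \<tau> + boundary_in V g \<tau>"
  unfolding boundary_in_def by (simp add: distrib_left sum.distrib)

lemma boundary_in_sum: "boundary_in V (\<lambda>\<sigma>. \<Sum>v\<in>A. c v \<sigma>) \<tau> = (\<Sum>v\<in>A. boundary_in V (c v) \<tau>)"
  unfolding boundary_in_def by (simp add: sum_distrib_left sum.swap[of _ A])

lemma boundary_in_eq_zero:
  assumes "\<And>v. c (insert v \<tau>) = 0" shows "boundary_in V c \<tau> = 0"
  unfolding boundary_in_def using assms by simp

lemma boundary_subcomplex:
  assumes "finite (\<Union>\<Gamma>)" "\<Gamma>' \<subseteq> \<Gamma>" "\<And>\<sigma>. c \<sigma> \<noteq> 0 \<Longrightarrow> \<sigma> \<in> \<Gamma>'"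
  shows "boundary \<Gamma> c \<tau> = boundary \<Gamma>' c \<tau>"
proof -
  have "boundary \<Gamma> c \<tau> = boundary_in (\<Union>\<Gamma>) c \<tau>"
    using assms by (intro boundary_eq_boundary_in) auto
  also have "\<dots> = boundary \<Gamma>' c \<tau>"
    using assms by (intro boundary_eq_boundary_in[symmetric]) auto
  finally show ?thesis .
qed

lemma boundary_link_eq_boundary_in:
  assumes "simplicial_complex \<Delta>" "\<And>\<sigma>. c \<sigma> \<noteq> 0 \<Longrightarrow> \<sigma> \<in> link \<Delta> F"
  shows "boundary (link \<Delta> F) c \<tau> = boundary_in (\<Union>\<Delta>) c \<tau>"
  using assms simplicial_complex_finite_vertices
  by (intro boundary_eq_boundary_in) (auto simp: link_def)

lemma rel_cycle_cost_subcomplex: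
  assumes "finite (\<Union>\<Gamma>)" "\<Gamma>' \<subseteq> \<Gamma>" "rel_cycle K \<Gamma>' (cost \<Gamma>' F) n z"
  shows "rel_cycle K \<Gamma> (cost \<Gamma> F) n z"
proof -
  have supp: "z \<sigma> \<noteq> 0 \<Longrightarrow> \<sigma> \<in> \<Gamma>' - cost \<Gamma>' F \<and> card \<sigma> = n" for \<sigma>
    using assms(3) unfolding rel_cycle_def chain_on_def by blast
  have "boundary \<Gamma> z \<tau> = 0" if "\<tau> \<notin> cost \<Gamma> F" for \<tau>
  proof -
    have "boundary \<Gamma> z \<tau> = boundary \<Gamma>' z \<tau>"
      using supp by (intro boundary_subcomplex[OF assms(1,2)]) blast
    moreover have "\<tau> \<notin> cost \<Gamma>' F" using that assms(2) unfolding cost_def by blast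
    ultimately show ?thesis using assms(3) unfolding rel_cycle_def by simp
  qed
  moreover have "chain_on (\<Gamma> - cost \<Gamma> F) n z"
    using supp assms(2) unfolding chain_on_def cost_def by blast
  ultimately show ?thesis unfolding rel_cycle_def by blast
qed

section \<open>Contraction at a vertex\<close>

lemma card_less_insert:
  assumes "finite \<rho>" "w \<notin> \<rho>"
  shows "card {u\<in>insert w \<rho>. u < v} = card {u\<in>\<rho>. u < v} + (if w < v then 1 else 0)"
proof -
  have "{u\<in>insert w \<rho>. u < v} = (if w < v then insert w {u\<in>\<rho>. u < v} else {u\<in>\<rho>. u < v})"
    by auto
  then show ?thesis using assms by simp
qed

lemma bd_sign_insert_swap:
  fixes \<rho> :: "'v::linorder set"
  assumes "finite \<rho>" "v \<notin> \<rho>" "w \<notin> \<rho>" "v \<noteq> w"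
  shows "(bd_sign (insert w \<rho>) w * bd_sign (insert v (insert w \<rho>)) v :: 'k::field)
       = - (bd_sign (insert v \<rho>) v * bd_sign (insert w (insert v \<rho>)) w)"
proof -
  have self: "{u\<in>insert x X. u < x} = {u\<in>X. u < x}" for x :: 'v and X by auto
  have "card {u\<in>insert v (insert w \<rho>). u < v} = card {u\<in>\<rho>. u < v} + (if w < v then 1 else 0)"
       "card {u\<in>insert w (insert v \<rho>). u < w} = card {u\<in>\<rho>. u < w} + (if v < w then 1 else 0)"
    using card_less_insert[OF assms(1,3)] card_less_insert[OF assms(1,2)] self by metis+
  then show ?thesis
    unfolding bd_sign_def self using assms(4) by (cases "w < v") (auto simp: power_add)
qed

text \<open>The part of a chain on the star of v, transported to the link of v.\<close>

definition contract :: "('v::linorder set \<Rightarrow> 'k::field) \<Rightarrow> 'v \<Rightarrow> 'v set \<Rightarrow> 'k" where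
  "contract c v \<rho> = (if v \<notin> \<rho> then bd_sign (insert v \<rho>) v * c (insert v \<rho>) else 0)"

lemma boundary_in_contract:
  fixes c :: "'v::linorder set \<Rightarrow> 'k::field"
  assumes "finite V" "finite \<rho>" "v \<notin> \<rho>"
  shows "boundary_in V (contract c v) \<rho> = - (bd_sign (insert v \<rho>) v * boundary_in V c (insert v \<rho>))"
proof -
  have "boundary_in V (contract c v) \<rho>
      = (\<Sum>w\<in>V - insert v \<rho>. bd_sign (insert w \<rho>) w * contract c v (insert w \<rho>))"
    unfolding boundary_in_def
    by (rule sum.mono_neutral_cong_right) (use assms in \<open>auto simp: contract_def\<close>)
  also have "\<dots> = (\<Sum>w\<in>V - insert v \<rho>.
      - (bd_sign (insert v \<rho>) v * (bd_sign (insert w (insert v \<rho>)) w * c (insert w (insert v \<rho>)))))"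
  proof (rule sum.cong)
    fix w assume w: "w \<in> V - insert v \<rho>"
    then have "v \<notin> insert w \<rho>" using assms(3) by auto
    then have "contract c v (insert w \<rho>) = bd_sign (insert v (insert w \<rho>)) v * c (insert w (insert v \<rho>))"
      unfolding contract_def by (simp add: insert_commute)
    moreover have "bd_sign (insert w \<rho>) w * bd_sign (insert v (insert w \<rho>)) v
        = - (bd_sign (insert v \<rho>) v * bd_sign (insert w (insert v \<rho>)) w :: 'k)"
      using bd_sign_insert_swap[OF assms(2,3), of w] w by auto
    ultimately show "bd_sign (insert w \<rho>) w * contract c v (insert w \<rho>)
      = - (bd_sign (insert v \<rho>) v * (bd_sign (insert w (insert v \<rho>)) w * c (insert w (insert v \<rho>))))"
      by (simp only: mult.assoc[symmetric] mult_minus_left)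
  qed simp
  also have "\<dots> = - (bd_sign (insert v \<rho>) v * boundary_in V c (insert v \<rho>))"
    unfolding boundary_in_def by (simp add: sum_distrib_left sum_negf)
  finally show ?thesis .
qed

lemma chain_on_contract:
  assumes "simplicial_complex \<Gamma>" "chain_on \<Gamma> (Suc n) b"
  shows "chain_on (link \<Gamma> {v}) n (contract b v)"
  unfolding chain_on_def
proof (intro allI impI)
  fix \<rho> assume "contract b v \<rho> \<noteq> 0"
  then have "v \<notin> \<rho>" "b (insert v \<rho>) \<noteq> 0" unfolding contract_def by (auto split: if_splits)
  then have v\<rho>: "insert v \<rho> \<in> \<Gamma>" "card (insert v \<rho>) = Suc n" "v \<notin> \<rho>"
    using chain_onD[OF assms(2)] by blast+
  moreover have "\<rho> \<in> \<Gamma>" using simplicial_complexD[OF assms(1) v\<rho>(1)] by blast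
  moreover have "finite \<rho>" using simplicial_complex_finite_face[OF assms(1) \<open>\<rho> \<in> \<Gamma>\<close>] .
  ultimately show "\<rho> \<in> link \<Gamma> {v} \<and> card \<rho> = n" unfolding link_def by simp
qed

lemma rel_cycle_link_contract:
  fixes b :: "'v::linorder set \<Rightarrow> 'k::field"
  assumes sc: "simplicial_complex \<Gamma>" and b: "chain_on \<Gamma> (Suc n) b"
    and star: "\<And>\<rho>. boundary \<Gamma> b (insert v \<rho>) = 0"
  shows "rel_cycle K (link \<Gamma> {v}) {} n (contract b v)"
proof -
  let ?V = "\<Union>\<Gamma>"
  have finV: "finite ?V" by (rule simplicial_complex_finite_vertices[OF sc])
  have supp: "contract b v \<rho> \<noteq> 0 \<Longrightarrow> \<rho> \<in> link \<Gamma> {v} \<and> card \<rho> = n" for \<rho>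
    using chain_on_contract[OF sc b] unfolding chain_on_def by blast
  have "boundary (link \<Gamma> {v}) (contract b v) \<rho> = 0" for \<rho>
  proof -
    have "boundary (link \<Gamma> {v}) (contract b v) \<rho> = boundary_in ?V (contract b v) \<rho>"
      using supp by (intro boundary_link_eq_boundary_in[OF sc]) blast
    also have "\<dots> = 0"
    proof (cases "finite \<rho> \<and> v \<notin> \<rho>")
      case True
      have "boundary_in ?V b (insert v \<rho>) = boundary \<Gamma> b (insert v \<rho>)"
        using chain_onD[OF b] by (intro boundary_eq_boundary_in[symmetric, OF finV]) auto
      then show ?thesis using True star by (simp add: boundary_in_contract[OF finV])
    next
      case False
      have "contract b v (insert w \<rho>) = 0" for w
      proof (rule ccontr)
        assume "contract b v (insert w \<rho>) \<noteq> 0"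
        then have "insert w \<rho> \<in> link \<Gamma> {v}" using supp by blast
        then have "insert w \<rho> \<in> \<Gamma>" "v \<notin> insert w \<rho>" unfolding link_def by auto
        then have "finite \<rho>" "v \<notin> \<rho>"
          using simplicial_complex_finite_face[OF sc] by (metis finite_insert, blast)
        then show False using False by simp
      qed
      then show ?thesis by (rule boundary_in_eq_zero)
    qed
    finally show ?thesis .
  qed
  then show ?thesis using supp unfolding rel_cycle_def chain_on_def by blast
qed

lemma boundary_in_split:
  assumes "finite V" "\<tau> \<inter> W = {}"
  shows "boundary_in V c \<tau>
    = boundary_in V (\<lambda>\<sigma>. if \<sigma> \<inter> W = {} then c \<sigma> else 0) \<tau> + (\<Sum>v\<in>V \<inter> W. contract c v \<tau>)"
proof -
  define g where "g w = bd_sign (insert w \<tau>) w * c (insert w \<tau>)" for w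
  have "boundary_in V c \<tau> = (\<Sum>w\<in>V - \<tau>. (if w \<notin> W then g w else 0) + (if w \<in> W then g w else 0))"
    unfolding boundary_in_def g_def by (intro sum.cong) auto
  also have "\<dots> = (\<Sum>w\<in>V - \<tau>. if w \<notin> W then g w else 0) + (\<Sum>w\<in>V - \<tau>. if w \<in> W then g w else 0)"
    by (rule sum.distrib)
  also have "(\<Sum>w\<in>V - \<tau>. if w \<notin> W then g w else 0)
      = boundary_in V (\<lambda>\<sigma>. if \<sigma> \<inter> W = {} then c \<sigma> else 0) \<tau>"
    unfolding boundary_in_def g_def using assms(2) by (intro sum.cong) auto
  also have "(\<Sum>w\<in>V - \<tau>. if w \<in> W then g w else 0) = (\<Sum>w\<in>V \<inter> W. g w)"
  proof -
    have "{w\<in>V - \<tau>. w \<in> W} = V \<inter> W" using assms(2) by blast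
    then show ?thesis using assms(1) by (simp add: sum.inter_filter[symmetric])
  qed
  also have "\<dots> = (\<Sum>v\<in>V \<inter> W. contract c v \<tau>)"
    unfolding g_def contract_def using assms(2) by (intro sum.cong) auto
  finally show ?thesis .
qed

lemma contract_eq_zero_if_meets:
  assumes at_most_one: "\<And>\<sigma> u w. \<sigma> \<in> \<Gamma> \<Longrightarrow> u \<in> \<sigma> \<Longrightarrow> w \<in> \<sigma> \<Longrightarrow> u \<in> W \<Longrightarrow> w \<in> W \<Longrightarrow> u = w"
    and b: "\<And>\<sigma>. b \<sigma> \<noteq> 0 \<Longrightarrow> \<sigma> \<in> \<Gamma>" and "v \<in> W" "\<tau> \<inter> W \<noteq> {}"
  shows "contract b v \<tau> = 0"
proof (cases "v \<in> \<tau>")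
  case False
  obtain u where "u \<in> \<tau>" "u \<in> W" using assms(4) by blast
  then have "insert v \<tau> \<notin> \<Gamma>" using at_most_one[of "insert v \<tau>" u v] \<open>v \<in> W\<close> False by auto
  then show ?thesis using b unfolding contract_def by auto
qed (simp add: contract_def)

text \<open>Replacing the part of b near each v \<in> W by a chain with boundary the contraction of b
  at v yields a chain avoiding W whose boundary agrees with that of b off W.\<close>

lemma boundary_in_repair:
  assumes finV: "finite V"
    and at_most_one: "\<And>\<sigma> u w. \<sigma> \<in> \<Gamma> \<Longrightarrow> u \<in> \<sigma> \<Longrightarrow> w \<in> \<sigma> \<Longrightarrow> u \<in> W \<Longrightarrow> w \<in> W \<Longrightarrow> u = w"
    and b: "\<And>\<sigma>. b \<sigma> \<noteq> 0 \<Longrightarrow> \<sigma> \<in> \<Gamma>"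
    and e: "\<And>v \<tau>. v \<in> W \<Longrightarrow> boundary_in V (e v) \<tau> = contract b v \<tau>"
  shows "boundary_in V (\<lambda>\<sigma>. (if \<sigma> \<inter> W = {} then b \<sigma> else 0) + (\<Sum>v\<in>V \<inter> W. e v \<sigma>)) \<tau>
    = (if \<tau> \<inter> W = {} then boundary_in V b \<tau> else 0)"
proof -
  have "boundary_in V (\<lambda>\<sigma>. (if \<sigma> \<inter> W = {} then b \<sigma> else 0) + (\<Sum>v\<in>V \<inter> W. e v \<sigma>)) \<tau>
      = boundary_in V (\<lambda>\<sigma>. if \<sigma> \<inter> W = {} then b \<sigma> else 0) \<tau> + (\<Sum>v\<in>V \<inter> W. contract b v \<tau>)"
    unfolding boundary_in_add boundary_in_sum using e by simp
  also have "\<dots> = (if \<tau> \<inter> W = {} then boundary_in V b \<tau> else 0)"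
  proof (cases "\<tau> \<inter> W = {}")
    case True
    then show ?thesis using boundary_in_split[OF finV True, of b] by simp
  next
    case False
    then have "boundary_in V (\<lambda>\<sigma>. if \<sigma> \<inter> W = {} then b \<sigma> else 0) \<tau> = 0"
      by (intro boundary_in_eq_zero) auto
    then show ?thesis
      using False contract_eq_zero_if_meets[of \<Gamma> W b, OF at_most_one b] by simp
  qed
  finally show ?thesis .
qed

lemma chain_on_repair:
  assumes at_most_one: "\<And>\<sigma> u w. \<sigma> \<in> \<Gamma> \<Longrightarrow> u \<in> \<sigma> \<Longrightarrow> w \<in> \<sigma> \<Longrightarrow> u \<in> W \<Longrightarrow> w \<in> W \<Longrightarrow> u = w"
    and b: "chain_on \<Gamma> m b" and e: "\<And>v. v \<in> W \<Longrightarrow> chain_on (link \<Gamma> {v}) m (e v)"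
  shows "chain_on (delete_vertices \<Gamma> W) m (\<lambda>\<sigma>. (if \<sigma> \<inter> W = {} then b \<sigma> else 0) + (\<Sum>v\<in>V \<inter> W. e v \<sigma>))"
  unfolding chain_on_def
proof (intro allI impI)
  fix \<sigma> assume nz: "(if \<sigma> \<inter> W = {} then b \<sigma> else 0) + (\<Sum>v\<in>V \<inter> W. e v \<sigma>) \<noteq> 0"
  show "\<sigma> \<in> delete_vertices \<Gamma> W \<and> card \<sigma> = m"
  proof (cases "\<sigma> \<inter> W = {} \<and> b \<sigma> \<noteq> 0")
    case True
    then show ?thesis using chain_onD[OF b] unfolding delete_vertices_def by auto
  next
    case False
    then have "(\<Sum>v\<in>V \<inter> W. e v \<sigma>) \<noteq> 0" using nz by (auto split: if_splits)
    then obtain v where v: "v \<in> W" "e v \<sigma> \<noteq> 0"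
      by (auto elim: sum.not_neutral_contains_not_neutral)
    then have "\<sigma> \<in> link \<Gamma> {v}" and card: "card \<sigma> = m" using chain_onD[OF e] by blast+
    then have "\<sigma> \<in> \<Gamma>" "v \<notin> \<sigma>" "insert v \<sigma> \<in> \<Gamma>" unfolding link_def by auto
    then have "\<sigma> \<inter> W = {}" using at_most_one[of "insert v \<sigma>" _ v] v(1) by blast
    with \<open>\<sigma> \<in> \<Gamma>\<close> card show ?thesis unfolding delete_vertices_def by simp
  qed
qed

lemma homology_vanishes_delete_vertices:
  fixes K :: "'k::field itself" and \<Gamma> :: "'v::linorder set set"
  assumes sc: "simplicial_complex \<Gamma>"
    and at_most_one: "\<And>\<sigma> u w. \<sigma> \<in> \<Gamma> \<Longrightarrow> u \<in> \<sigma> \<Longrightarrow> w \<in> \<sigma> \<Longrightarrow> u \<in> W \<Longrightarrow> w \<in> W \<Longrightarrow> u = w"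
    and hv: "homology_vanishes K \<Gamma> n"
    and hv_link: "\<And>v. v \<in> W \<Longrightarrow> homology_vanishes K (link \<Gamma> {v}) n"
  shows "homology_vanishes K (delete_vertices \<Gamma> W) n"
  unfolding homology_vanishes_def
proof (intro allI impI)
  let ?V = "\<Union>\<Gamma>" and ?\<Gamma>' = "delete_vertices \<Gamma> W"
  have finV: "finite ?V" by (rule simplicial_complex_finite_vertices[OF sc])
  have sub: "?\<Gamma>' \<subseteq> \<Gamma>" unfolding delete_vertices_def by blast
  fix z :: "'v set \<Rightarrow> 'k" assume z: "rel_cycle K ?\<Gamma>' {} n z"
  then have zsupp: "z \<sigma> \<noteq> 0 \<Longrightarrow> \<sigma> \<in> ?\<Gamma>'" for \<sigma>
    unfolding rel_cycle_def chain_on_def by blast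
  have "rel_cycle K \<Gamma> {} n z"
    using rel_cycle_cost_subcomplex[OF finV sub, of K "{}"] z by simp
  then obtain b where b: "chain_on \<Gamma> (Suc n) b" and zb: "\<And>\<tau>. z \<tau> = boundary \<Gamma> b \<tau>"
    using hv by (auto elim: homology_vanishesE simp: rel_cycle_def)
  have "\<exists>e. chain_on (link \<Gamma> {v}) (Suc n) e \<and> (\<forall>\<tau>. contract b v \<tau> = boundary (link \<Gamma> {v}) e \<tau>)"
    if v: "v \<in> W" for v
  proof -
    have "boundary \<Gamma> b (insert v \<rho>) = 0" for \<rho>
      using zb[of "insert v \<rho>"] zsupp[of "insert v \<rho>"] v unfolding delete_vertices_def by auto
    then have "rel_cycle K (link \<Gamma> {v}) {} n (contract b v)"
      by (rule rel_cycle_link_contract[OF sc b])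
    then show ?thesis
      using hv_link[OF v] unfolding homology_vanishes_def rel_boundary_def by auto
  qed
  then obtain e where e: "\<And>v. v \<in> W \<Longrightarrow> chain_on (link \<Gamma> {v}) (Suc n) (e v)"
    and contract_e: "\<And>v \<tau>. v \<in> W \<Longrightarrow> contract b v \<tau> = boundary (link \<Gamma> {v}) (e v) \<tau>"
    by metis
  define b' where "b' \<sigma> = (if \<sigma> \<inter> W = {} then b \<sigma> else 0) + (\<Sum>v\<in>?V \<inter> W. e v \<sigma>)" for \<sigma>
  have "chain_on ?\<Gamma>' (Suc n) b'"
    unfolding b'_def by (rule chain_on_repair[OF _ b e]) (rule at_most_one)
  then have b'supp: "b' \<sigma> \<noteq> 0 \<Longrightarrow> \<sigma> \<in> ?\<Gamma>' \<and> card \<sigma> = Suc n" for \<sigma>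
    by (rule chain_onD)
  have "z \<tau> = boundary ?\<Gamma>' b' \<tau>" for \<tau>
  proof -
    have "boundary ?\<Gamma>' b' \<tau> = boundary_in ?V b' \<tau>"
      using b'supp sub by (intro boundary_eq_boundary_in[OF finV]) auto
    also have "\<dots> = (if \<tau> \<inter> W = {} then boundary_in ?V b \<tau> else 0)"
      unfolding b'_def
    proof (rule boundary_in_repair[OF finV at_most_one])
      show "b \<sigma> \<noteq> 0 \<Longrightarrow> \<sigma> \<in> \<Gamma>" for \<sigma> using chain_onD[OF b] by blast
      show "boundary_in ?V (e v) \<tau> = contract b v \<tau>" if "v \<in> W" for v \<tau>
        using chain_onD[OF e[OF that]] contract_e[OF that]
        by (simp add: boundary_link_eq_boundary_in[OF sc])
    qed
    also have "\<dots> = z \<tau>"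
      using zb zsupp chain_onD[OF b] unfolding delete_vertices_def
      by (auto simp: boundary_eq_boundary_in[OF finV])
    finally show ?thesis by simp
  qed
  then show "rel_boundary K ?\<Gamma>' {} n z"
    unfolding rel_boundary_def chain_on_def using b'supp by (intro exI[of _ b']) auto
qed

lemma rel_cycle_sum_contract:
  fixes K :: "'k::field itself" and \<Gamma> :: "'v::linorder set set"
  assumes sc: "simplicial_complex \<Gamma>"
    and at_most_one: "\<And>\<sigma> u w. \<sigma> \<in> \<Gamma> \<Longrightarrow> u \<in> \<sigma> \<Longrightarrow> w \<in> \<sigma> \<Longrightarrow> u \<in> W \<Longrightarrow> w \<in> W \<Longrightarrow> u = w"
    and c: "\<And>v. v \<in> W \<Longrightarrow> rel_cycle K \<Gamma> {} (Suc n) (c v)"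
  shows "rel_cycle K (delete_vertices \<Gamma> W) {} n (\<lambda>\<rho>. \<Sum>v\<in>\<Union>\<Gamma> \<inter> W. contract (c v) v \<rho>)"
proof -
  let ?V = "\<Union>\<Gamma>" and ?y = "\<lambda>\<rho>. \<Sum>v\<in>\<Union>\<Gamma> \<inter> W. contract (c v) v \<rho>"
  have finV: "finite ?V" by (rule simplicial_complex_finite_vertices[OF sc])
  have cv: "chain_on \<Gamma> (Suc n) (c v)" if "v \<in> W" for v
    using c[OF that] unfolding rel_cycle_def by simp
  have supp: "\<rho> \<in> delete_vertices \<Gamma> W \<and> card \<rho> = n" if y: "?y \<rho> \<noteq> 0" for \<rho>
  proof -
    obtain v where "v \<in> ?V \<inter> W" "contract (c v) v \<rho> \<noteq> 0"
      using y by (rule sum.not_neutral_contains_not_neutral)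
    then have v: "v \<in> W" "contract (c v) v \<rho> \<noteq> 0" by simp_all
    then have "\<rho> \<in> link \<Gamma> {v}" "card \<rho> = n"
      using chain_onD[OF chain_on_contract[OF sc cv[OF v(1)]]] by simp_all
    then have "\<rho> \<in> \<Gamma>" "insert v \<rho> \<in> \<Gamma>" "v \<notin> \<rho>" unfolding link_def by auto
    then have "u \<notin> W" if "u \<in> \<rho>" for u
      using at_most_one[of "insert v \<rho>" u v] that v(1) by auto
    then have "\<rho> \<inter> W = {}" by blast
    with \<open>\<rho> \<in> \<Gamma>\<close> \<open>card \<rho> = n\<close> show ?thesis unfolding delete_vertices_def by simp
  qed
  have "boundary_in ?V (contract (c v) v) \<rho> = 0" if v: "v \<in> W" for v \<rho>
  proof -
    have "rel_cycle K (link \<Gamma> {v}) {} n (contract (c v) v)"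
      using c[OF v] by (intro rel_cycle_link_contract[OF sc cv[OF v]]) (simp add: rel_cycle_def)
    moreover have "boundary (link \<Gamma> {v}) (contract (c v) v) \<rho> = boundary_in ?V (contract (c v) v) \<rho>"
      using chain_onD[OF chain_on_contract[OF sc cv[OF v]]]
      by (intro boundary_link_eq_boundary_in[OF sc]) blast
    ultimately show ?thesis unfolding rel_cycle_def by simp
  qed
  moreover have "\<Union>(delete_vertices \<Gamma> W) \<subseteq> ?V" unfolding delete_vertices_def by blast
  then have "boundary (delete_vertices \<Gamma> W) ?y \<rho> = boundary_in ?V ?y \<rho>" for \<rho>
    using supp by (intro boundary_eq_boundary_in[OF finV]) blast+
  ultimately have "boundary (delete_vertices \<Gamma> W) ?y \<rho> = 0" for \<rho>
    by (simp add: boundary_in_sum)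
  then show ?thesis using supp unfolding rel_cycle_def chain_on_def by blast
qed

section \<open>Relative homology of a contrastar\<close>

text \<open>The sign of the shuffle moving the vertices of F behind those of \<rho>: it converts
  orientations of \<rho> \<union> F into orientations of \<rho> followed by F.\<close>

definition face_sign :: "'v::linorder set \<Rightarrow> 'v set \<Rightarrow> 'k::field" where
  "face_sign F \<rho> = (-1) ^ (\<Sum>a\<in>\<rho>. card {b\<in>F. b < a})"

lemma face_sign_insert:
  "finite \<rho> \<Longrightarrow> w \<notin> \<rho> \<Longrightarrow> face_sign F (insert w \<rho>) = face_sign F \<rho> * (-1) ^ card {b\<in>F. b < w}"
  unfolding face_sign_def by (simp add: power_add mult.commute)

lemma face_sign_square [simp]: "face_sign F \<rho> * face_sign F \<rho> = 1"
  unfolding face_sign_def by simp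

lemma bd_sign_Un:
  fixes \<rho> :: "'v::linorder set"
  assumes "finite \<rho>" "finite F" "\<rho> \<inter> F = {}" "w \<notin> F"
  shows "(bd_sign (insert w (\<rho> \<union> F)) w :: 'k::field) = bd_sign (insert w \<rho>) w * (-1) ^ card {b\<in>F. b < w}"
proof -
  have "{u\<in>insert w (\<rho> \<union> F). u < w} = {u\<in>\<rho>. u < w} \<union> {u\<in>F. u < w}"
    "{u\<in>insert w \<rho>. u < w} = {u\<in>\<rho>. u < w}" by auto
  moreover have "card ({u\<in>\<rho>. u < w} \<union> {u\<in>F. u < w}) = card {u\<in>\<rho>. u < w} + card {u\<in>F. u < w}"
    by (rule card_Un_disjoint) (use assms in auto)
  ultimately show ?thesis unfolding bd_sign_def by (simp add: power_add)
qed

text \<open>The chain isomorphism between chains of \<Delta> supported on faces containing F and chains of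
  the link of F, in both directions.\<close>

definition link_chain :: "'v::linorder set \<Rightarrow> ('v set \<Rightarrow> 'k::field) \<Rightarrow> 'v set \<Rightarrow> 'k" where
  "link_chain F z \<rho> = (if \<rho> \<inter> F = {} then face_sign F \<rho> * z (\<rho> \<union> F) else 0)"

definition join_chain :: "'v::linorder set \<Rightarrow> ('v set \<Rightarrow> 'k::field) \<Rightarrow> 'v set \<Rightarrow> 'k" where
  "join_chain F b \<sigma> = (if F \<subseteq> \<sigma> then face_sign F (\<sigma> - F) * b (\<sigma> - F) else 0)"

lemma boundary_in_link_chain:
  fixes z :: "'v::linorder set \<Rightarrow> 'k::field"
  assumes "finite V" "finite F" "finite \<rho>" "\<rho> \<inter> F = {}"
  shows "boundary_in V (link_chain F z) \<rho> = face_sign F \<rho> * boundary_in V z (\<rho> \<union> F)"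
proof -
  have "boundary_in V (link_chain F z) \<rho>
      = (\<Sum>w\<in>V - (\<rho> \<union> F). bd_sign (insert w \<rho>) w * link_chain F z (insert w \<rho>))"
    unfolding boundary_in_def
    by (rule sum.mono_neutral_cong_right) (use assms in \<open>auto simp: link_chain_def\<close>)
  also have "\<dots> = (\<Sum>w\<in>V - (\<rho> \<union> F). face_sign F \<rho> * (bd_sign (insert w (\<rho> \<union> F)) w * z (insert w (\<rho> \<union> F))))"
  proof (rule sum.cong)
    fix w assume w: "w \<in> V - (\<rho> \<union> F)"
    then have "link_chain F z (insert w \<rho>) = face_sign F (insert w \<rho>) * z (insert w (\<rho> \<union> F))"
      using assms(4) unfolding link_chain_def by auto
    moreover have "face_sign F (insert w \<rho>) = (face_sign F \<rho> * (-1) ^ card {b\<in>F. b < w} :: 'k)"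
      "bd_sign (insert w (\<rho> \<union> F)) w = (bd_sign (insert w \<rho>) w * (-1) ^ card {b\<in>F. b < w} :: 'k)"
      using w by (simp_all add: face_sign_insert[OF assms(3)] bd_sign_Un[OF assms(3,2,4)])
    ultimately show "bd_sign (insert w \<rho>) w * link_chain F z (insert w \<rho>)
      = face_sign F \<rho> * (bd_sign (insert w (\<rho> \<union> F)) w * z (insert w (\<rho> \<union> F)))"
      by (simp only: mult_ac)
  qed simp
  also have "\<dots> = face_sign F \<rho> * boundary_in V z (\<rho> \<union> F)"
    unfolding boundary_in_def by (simp add: sum_distrib_left)
  finally show ?thesis .
qed

lemma boundary_in_join_chain:
  fixes b :: "'v::linorder set \<Rightarrow> 'k::field"
  assumes "finite V" "finite \<tau>" "F \<subseteq> \<tau>" and b: "\<And>\<sigma>. b \<sigma> \<noteq> 0 \<Longrightarrow> \<sigma> \<inter> F = {}"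
  shows "boundary_in V (join_chain F b) \<tau> = face_sign F (\<tau> - F) * boundary_in V b (\<tau> - F)"
proof -
  define \<rho> where "\<rho> = \<tau> - F"
  have fin: "finite \<rho>" "finite F" and disj: "\<rho> \<inter> F = {}" and \<tau>: "\<tau> = \<rho> \<union> F"
    using assms(2,3) finite_subset unfolding \<rho>_def by auto
  have "boundary_in V b \<rho> = (\<Sum>w\<in>V - \<tau>. bd_sign (insert w \<rho>) w * b (insert w \<rho>))"
    unfolding boundary_in_def
    by (rule sum.mono_neutral_cong_right) (use assms(1) \<tau> b in auto)
  then have "face_sign F \<rho> * boundary_in V b \<rho>
      = (\<Sum>w\<in>V - \<tau>. face_sign F \<rho> * (bd_sign (insert w \<rho>) w * b (insert w \<rho>)))"
    by (simp add: sum_distrib_left)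
  also have "\<dots> = boundary_in V (join_chain F b) \<tau>"
    unfolding boundary_in_def
  proof (rule sum.cong)
    fix w assume w: "w \<in> V - \<tau>"
    then have "insert w \<tau> - F = insert w \<rho>" and "F \<subseteq> insert w \<tau>"
      using \<tau> disj by auto
    then have "join_chain F b (insert w \<tau>) = face_sign F (insert w \<rho>) * b (insert w \<rho>)"
      unfolding join_chain_def by simp
    moreover have "face_sign F (insert w \<rho>) = (face_sign F \<rho> * (-1) ^ card {b\<in>F. b < w} :: 'k)"
      "bd_sign (insert w \<tau>) w = (bd_sign (insert w \<rho>) w * (-1) ^ card {b\<in>F. b < w} :: 'k)"
      using w \<tau> by (simp_all add: face_sign_insert[OF fin(1)] bd_sign_Un[OF fin disj])
    ultimately show "face_sign F \<rho> * (bd_sign (insert w \<rho>) w * b (insert w \<rho>))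
      = bd_sign (insert w \<tau>) w * join_chain F b (insert w \<tau>)"
      by (simp add: mult_ac)
  qed simp
  finally show ?thesis unfolding \<rho>_def by simp
qed

lemma link_chain_join_chain:
  assumes "F \<subseteq> \<sigma>" shows "link_chain F z (\<sigma> - F) = face_sign F (\<sigma> - F) * z \<sigma>"
proof -
  have "(\<sigma> - F) \<inter> F = {}" "(\<sigma> - F) \<union> F = \<sigma>" using assms by blast+
  then show ?thesis unfolding link_chain_def by simp
qed

lemma chain_on_link_chain:
  assumes sc: "simplicial_complex \<Delta>" and finF: "finite F" and z: "chain_on (\<Delta> - cost \<Delta> F) n z"
  shows "chain_on (link \<Delta> F) (n - card F) (link_chain F z)"
  unfolding chain_on_def
proof (intro allI impI)
  fix \<rho> assume "link_chain F z \<rho> \<noteq> 0"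
  then have disj: "\<rho> \<inter> F = {}" and "z (\<rho> \<union> F) \<noteq> 0"
    unfolding link_chain_def by (auto split: if_splits)
  then have "\<rho> \<union> F \<in> \<Delta>" "card (\<rho> \<union> F) = n" using chain_onD[OF z] by blast+
  moreover have "\<rho> \<in> \<Delta>" using simplicial_complexD[OF sc \<open>\<rho> \<union> F \<in> \<Delta>\<close>] by blast
  moreover have "card (\<rho> \<union> F) = card \<rho> + card F"
    using simplicial_complex_finite_face[OF sc \<open>\<rho> \<in> \<Delta>\<close>] finF disj by (simp add: card_Un_disjoint)
  ultimately show "\<rho> \<in> link \<Delta> F \<and> card \<rho> = n - card F" using disj unfolding link_def by simp
qed

lemma chain_on_join_chain:
  assumes sc: "simplicial_complex \<Delta>" and finF: "finite F" and b: "chain_on (link \<Delta> F) m b"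
  shows "chain_on (\<Delta> - cost \<Delta> F) (m + card F) (join_chain F b)"
  unfolding chain_on_def
proof (intro allI impI)
  fix \<sigma> assume "join_chain F b \<sigma> \<noteq> 0"
  then have "F \<subseteq> \<sigma>" "b (\<sigma> - F) \<noteq> 0" unfolding join_chain_def by (auto split: if_splits)
  then have "\<sigma> - F \<in> link \<Delta> F" "card (\<sigma> - F) = m" using chain_onD[OF b] by blast+
  then have "\<sigma> \<in> \<Delta>" using \<open>F \<subseteq> \<sigma>\<close> unfolding link_def by (simp add: Un_absorb2)
  moreover have "card (\<sigma> - F) = card \<sigma> - card F"
    using \<open>F \<subseteq> \<sigma>\<close> finF by (simp add: card_Diff_subset)
  moreover have "card F \<le> card \<sigma>"
    using \<open>F \<subseteq> \<sigma>\<close> simplicial_complex_finite_face[OF sc \<open>\<sigma> \<in> \<Delta>\<close>] by (simp add: card_mono)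
  ultimately show "\<sigma> \<in> \<Delta> - cost \<Delta> F \<and> card \<sigma> = m + card F"
    using \<open>F \<subseteq> \<sigma>\<close> \<open>card (\<sigma> - F) = m\<close> unfolding cost_def by simp
qed

lemma rel_cycle_link_chain:
  fixes z :: "'v::linorder set \<Rightarrow> 'k::field"
  assumes sc: "simplicial_complex \<Delta>" and F: "F \<in> \<Delta>" and z: "rel_cycle K \<Delta> (cost \<Delta> F) n z"
  shows "rel_cycle K (link \<Delta> F) {} (n - card F) (link_chain F z)"
proof -
  let ?V = "\<Union>\<Delta>"
  have finV: "finite ?V" by (rule simplicial_complex_finite_vertices[OF sc])
  have finF: "finite F" by (rule simplicial_complex_finite_face[OF sc F])
  have zsupp: "z \<sigma> \<noteq> 0 \<Longrightarrow> \<sigma> \<in> \<Delta> \<and> F \<subseteq> \<sigma> \<and> card \<sigma> = n" for \<sigma>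
    using z unfolding rel_cycle_def chain_on_def cost_def by auto
  have supp: "link_chain F z \<rho> \<noteq> 0 \<Longrightarrow> \<rho> \<in> link \<Delta> F \<and> card \<rho> = n - card F" for \<rho>
    using z chain_onD[OF chain_on_link_chain[OF sc finF]] unfolding rel_cycle_def by blast
  have "boundary (link \<Delta> F) (link_chain F z) \<rho> = 0" for \<rho>
  proof -
    have "boundary (link \<Delta> F) (link_chain F z) \<rho> = boundary_in ?V (link_chain F z) \<rho>"
      using supp by (intro boundary_link_eq_boundary_in[OF sc]) blast
    also have "\<dots> = 0"
    proof (cases "finite \<rho> \<and> \<rho> \<inter> F = {}")
      case True
      have "boundary \<Delta> z (\<rho> \<union> F) = 0"
        using z unfolding rel_cycle_def cost_def by blast
      moreover have "boundary \<Delta> z (\<rho> \<union> F) = boundary_in ?V z (\<rho> \<union> F)"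
        using zsupp by (intro boundary_eq_boundary_in[OF finV]) auto
      ultimately show ?thesis using True by (simp add: boundary_in_link_chain[OF finV finF])
    next
      case False
      have "link_chain F z (insert w \<rho>) = 0" for w
      proof (rule ccontr)
        assume "link_chain F z (insert w \<rho>) \<noteq> 0"
        then have "insert w \<rho> \<in> \<Delta>" "insert w \<rho> \<inter> F = {}"
          using supp unfolding link_def by blast+
        moreover have "finite \<rho>"
          using simplicial_complex_finite_face[OF sc \<open>insert w \<rho> \<in> \<Delta>\<close>] by simp
        ultimately show False using False by blast
      qed
      then show ?thesis by (rule boundary_in_eq_zero)
    qed
    finally show ?thesis .
  qed
  then show ?thesis using supp unfolding rel_cycle_def chain_on_def by blast
qed

lemma rel_boundary_if_link_vanishes:
  fixes K :: "'k::field itself"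
  assumes sc: "simplicial_complex \<Delta>" and F: "F \<in> \<Delta>" "card F \<le> n"
    and z: "rel_cycle K \<Delta> (cost \<Delta> F) n z"
    and hv: "homology_vanishes K (link \<Delta> F) (n - card F)"
  shows "rel_boundary K \<Delta> (cost \<Delta> F) n z"
proof -
  let ?V = "\<Union>\<Delta>"
  have finV: "finite ?V" by (rule simplicial_complex_finite_vertices[OF sc])
  have finF: "finite F" by (rule simplicial_complex_finite_face[OF sc F(1)])
  have zsupp: "z \<sigma> \<noteq> 0 \<Longrightarrow> \<sigma> \<in> \<Delta>" for \<sigma>
    using z unfolding rel_cycle_def chain_on_def by blast
  obtain b where b: "chain_on (link \<Delta> F) (Suc (n - card F)) b"
    and zb: "\<And>\<rho>. link_chain F z \<rho> = boundary (link \<Delta> F) b \<rho>"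
    using rel_cycle_link_chain[OF sc F(1) z] hv
    by (auto elim: homology_vanishesE simp: rel_cycle_def)
  have bsupp: "b \<rho> \<noteq> 0 \<Longrightarrow> \<rho> \<in> link \<Delta> F \<and> card \<rho> = Suc (n - card F)" for \<rho>
    using chain_onD[OF b] .
  have "chain_on (\<Delta> - cost \<Delta> F) (Suc n) (join_chain F b)"
    using chain_on_join_chain[OF sc finF b] F(2) by (simp add: Suc_diff_le)
  then have jsupp: "join_chain F b \<sigma> \<noteq> 0 \<Longrightarrow> \<sigma> \<in> \<Delta> \<and> F \<subseteq> \<sigma> \<and> card \<sigma> = Suc n" for \<sigma>
    unfolding chain_on_def cost_def by blast
  have "z \<tau> = boundary \<Delta> (join_chain F b) \<tau>" if \<tau>: "\<tau> \<notin> cost \<Delta> F" for \<tau>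
  proof (cases "\<tau> \<in> \<Delta>")
    case True
    then have F\<tau>: "F \<subseteq> \<tau>" and fin\<tau>: "finite \<tau>"
      using \<tau> simplicial_complex_finite_face[OF sc] unfolding cost_def by auto
    have "boundary \<Delta> (join_chain F b) \<tau> = boundary_in ?V (join_chain F b) \<tau>"
      using jsupp by (intro boundary_eq_boundary_in[OF finV]) auto
    also have "\<dots> = face_sign F (\<tau> - F) * boundary_in ?V b (\<tau> - F)"
      using bsupp by (intro boundary_in_join_chain[OF finV fin\<tau> F\<tau>]) (auto simp: link_def)
    also have "boundary_in ?V b (\<tau> - F) = link_chain F z (\<tau> - F)"
      using zb bsupp by (simp add: boundary_link_eq_boundary_in[OF sc])
    also have "\<dots> = face_sign F (\<tau> - F) * z \<tau>"
      by (rule link_chain_join_chain[OF F\<tau>])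
    finally show ?thesis by (simp add: mult.assoc[symmetric])
  next
    case False
    then have "join_chain F b (insert w \<tau>) = 0" for w
      using jsupp simplicial_complexD[OF sc] by blast
    then show ?thesis
      using False zsupp by (auto simp: boundary_eq_boundary_in[OF finV] boundary_in_eq_zero jsupp)
  qed
  then show ?thesis
    unfolding rel_boundary_def chain_on_def cost_def using jsupp by (intro exI[of _ "join_chain F b"]) auto
qed

lemma rel_cycle_restrict_star:
  fixes b :: "'v::linorder set \<Rightarrow> 'k::field"
  assumes sc: "simplicial_complex \<Delta>" and b: "chain_on \<Delta> m b"
    and star: "\<And>\<tau>. \<tau> \<in> \<Delta> \<Longrightarrow> G \<subseteq> \<tau> \<Longrightarrow> boundary \<Delta> b \<tau> = 0"
  shows "rel_cycle K \<Delta> (cost \<Delta> G) m (\<lambda>\<sigma>. if G \<subseteq> \<sigma> then b \<sigma> else 0)"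
  unfolding rel_cycle_def
proof (intro conjI allI impI)
  show "chain_on (\<Delta> - cost \<Delta> G) m (\<lambda>\<sigma>. if G \<subseteq> \<sigma> then b \<sigma> else 0)"
    using chain_onD[OF b] unfolding chain_on_def cost_def by auto
next
  fix \<tau> assume \<tau>: "\<tau> \<notin> cost \<Delta> G"
  show "boundary \<Delta> (\<lambda>\<sigma>. if G \<subseteq> \<sigma> then b \<sigma> else 0) \<tau> = 0"
  proof (cases "\<tau> \<in> \<Delta>")
    case True
    then have "G \<subseteq> \<tau>" using \<tau> unfolding cost_def by blast
    then have "boundary \<Delta> (\<lambda>\<sigma>. if G \<subseteq> \<sigma> then b \<sigma> else 0) \<tau> = boundary \<Delta> b \<tau>"
      unfolding boundary_def by (intro sum.cong) auto
    then show ?thesis using star[OF True \<open>G \<subseteq> \<tau>\<close>] by simp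
  next
    case False
    then have "{v. v \<notin> \<tau> \<and> insert v \<tau> \<in> \<Delta>} = {}"
      using simplicial_complexD[OF sc] by blast
    then show ?thesis unfolding boundary_def by (simp only: sum.empty)
  qed
qed

text \<open>In the top degree there are no relative boundaries.\<close>

lemma homology_map_surj_top_degreeE:
  fixes K :: "'k::field itself" and y :: "'v::linorder set \<Rightarrow> 'k"
  assumes surj: "homology_map_surj K \<Delta> \<Gamma> d" and top: "\<forall>\<sigma>\<in>\<Delta>. card \<sigma> \<le> d"
    and y: "rel_cycle K \<Delta> \<Gamma> d y"
  obtains c where "rel_cycle K \<Delta> {} d c" "\<And>\<tau>. \<tau> \<notin> \<Gamma> \<Longrightarrow> c \<tau> = y \<tau>"
proof -
  obtain c b where c: "rel_cycle K \<Delta> {} d c" and b: "chain_on (\<Delta> - \<Gamma>) (Suc d) b"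
    and yc: "\<And>\<tau>. \<tau> \<notin> \<Gamma> \<Longrightarrow> (if \<tau> \<in> \<Gamma> then 0 else y \<tau> - c \<tau>) = boundary \<Delta> b \<tau>"
    using surj y unfolding homology_map_surj_def rel_boundary_def by blast
  have "b = (\<lambda>_. 0)"
    using top by (intro chain_on_zero_if_no_faces[OF b]) auto
  then have "c \<tau> = y \<tau>" if "\<tau> \<notin> \<Gamma>" for \<tau> using yc[OF that] that by simp
  with c show thesis by (rule that)
qed

section \<open>Deleting a colour class\<close>

lemma buchsbaumD:
  "buchsbaum K \<Delta> \<Longrightarrow> F \<in> \<Delta> \<Longrightarrow> F \<noteq> {} \<Longrightarrow> n < dim_card \<Delta> - card F
    \<Longrightarrow> homology_vanishes K (link \<Delta> F) n"
  unfolding buchsbaum_def by blast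

lemma buchsbaum_starD:
  "buchsbaum_star K \<Delta> \<Longrightarrow> F \<in> \<Delta> \<Longrightarrow> F \<noteq> {} \<Longrightarrow> homology_map_surj K \<Delta> (cost \<Delta> F) (dim_card \<Delta>)"
  unfolding buchsbaum_star_def by blast

locale colour_deletion =
  fixes \<Delta> :: "'v::linorder set set" and \<kappa> :: "'v \<Rightarrow> nat" and C :: "nat set" and i :: nat
  assumes sc: "simplicial_complex \<Delta>" and finite_C: "finite C" and dim: "dim_card \<Delta> = card C"
    and colours: "\<forall>v\<in>vertices \<Delta>. \<kappa> v \<in> C"
    and proper: "\<forall>u v. {u, v} \<in> \<Delta> \<and> u \<noteq> v \<longrightarrow> \<kappa> u \<noteq> \<kappa> v"
    and i: "i \<in> C" and nonempty: "\<Delta> \<noteq> {}"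
begin

abbreviation "\<Delta>' \<equiv> rank_selected \<Delta> \<kappa> (C - {i})"

lemma colour_unique: "\<sigma> \<in> \<Delta> \<Longrightarrow> u \<in> \<sigma> \<Longrightarrow> w \<in> \<sigma> \<Longrightarrow> \<kappa> u = \<kappa> w \<Longrightarrow> u = w"
  using proper simplicial_complexD[OF sc, of \<sigma> "{u, w}"] by blast

lemma face_colours: "\<sigma> \<in> \<Delta> \<Longrightarrow> \<kappa> ` \<sigma> \<subseteq> C"
  using colours unfolding vertices_def by blast

lemma card_face_colours: "\<sigma> \<in> \<Delta> \<Longrightarrow> card (\<kappa> ` \<sigma>) = card \<sigma>"
  using colour_unique by (intro card_image inj_onI) blast

lemma card_face_le: "\<sigma> \<in> \<Delta> \<Longrightarrow> card \<sigma> \<le> card C"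
  using card_mono[OF finite_C face_colours] card_face_colours by simp

lemma facet_meets_colour:
  assumes "\<sigma> \<in> \<Delta>" "card \<sigma> = card C" obtains u where "u \<in> \<sigma>" "\<kappa> u = i"
proof -
  have "\<kappa> ` \<sigma> = C"
    using assms card_face_colours face_colours card_subset_eq[OF finite_C] by metis
  then show thesis using i that by blast
qed

lemma mem_rank_selected: "\<sigma> \<in> \<Delta>' \<longleftrightarrow> \<sigma> \<in> \<Delta> \<and> (\<forall>u\<in>\<sigma>. \<kappa> u \<noteq> i)"
  using face_colours unfolding rank_selected_def by blast

lemma rank_selected_eq_delete_vertices: "\<Delta>' = delete_vertices \<Delta> {v. \<kappa> v = i}"
proof (intro set_eqI)
  show "\<sigma> \<in> \<Delta>' \<longleftrightarrow> \<sigma> \<in> delete_vertices \<Delta> {v. \<kappa> v = i}" for \<sigma>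
    unfolding mem_rank_selected delete_vertices_def by blast
qed

lemma facet_delete_colour:
  assumes "\<tau> \<in> \<Delta>" "card \<tau> = card C"
  obtains u where "u \<in> \<tau>" "\<kappa> u = i" "\<tau> - {u} \<in> \<Delta>'" "card (\<tau> - {u}) = card C - 1"
proof -
  obtain u where u: "u \<in> \<tau>" "\<kappa> u = i" using facet_meets_colour[OF assms] .
  have "\<tau> - {u} \<in> \<Delta>"
    using simplicial_complexD[OF sc assms(1)] by blast
  moreover have "\<kappa> x \<noteq> i" if "x \<in> \<tau> - {u}" for x
    using colour_unique[OF assms(1), of x u] u that by auto
  ultimately have "\<tau> - {u} \<in> \<Delta>'" unfolding mem_rank_selected by blast
  moreover have "card (\<tau> - {u}) = card C - 1"
    using assms(2) u(1) simplicial_complex_finite_face[OF sc assms(1)] by simp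
  ultimately show thesis using that u by blast
qed

lemma card_rank_selected_face_le:
  assumes "\<sigma> \<in> \<Delta>'" shows "card \<sigma> \<le> card C - 1"
proof -
  have "\<kappa> ` \<sigma> \<subseteq> C - {i}" "\<sigma> \<in> \<Delta>" using assms unfolding rank_selected_def by auto
  then have "card (\<kappa> ` \<sigma>) \<le> card (C - {i})" by (intro card_mono) (simp_all add: finite_C)
  then show ?thesis using card_face_colours[OF \<open>\<sigma> \<in> \<Delta>\<close>] i finite_C by simp
qed

lemma facet_exists: obtains \<tau> where "\<tau> \<in> \<Delta>" "card \<tau> = card C"
proof -
  have "finite \<Delta>" using sc unfolding simplicial_complex_def by blast
  then have "Max (card ` \<Delta>) \<in> card ` \<Delta>" using nonempty by (intro Max_in) auto
  then show thesis using dim that unfolding dim_card_def by auto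
qed

lemma dim_card_rank_selected: "dim_card \<Delta>' = card C - 1"
proof -
  obtain \<tau> where "\<tau> \<in> \<Delta>" "card \<tau> = card C" by (rule facet_exists)
  then obtain u where "\<tau> - {u} \<in> \<Delta>'" "card (\<tau> - {u}) = card C - 1"
    using facet_delete_colour by blast
  then have "card C - 1 \<in> card ` \<Delta>'" by force
  moreover have "finite \<Delta>'"
    using sc unfolding simplicial_complex_def rank_selected_def by simp
  ultimately show ?thesis
    unfolding dim_card_def using card_rank_selected_face_le by (intro Max_eqI) auto
qed

lemma pure_rank_selected:
  assumes "pure \<Delta>" shows "pure \<Delta>'"
  unfolding pure_def dim_card_rank_selected
proof
  fix \<sigma> assume \<sigma>: "\<sigma> \<in> \<Delta>'"
  then obtain \<tau> where \<tau>: "\<tau> \<in> \<Delta>" "\<sigma> \<subseteq> \<tau>" "card \<tau> = card C"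
    using assms dim unfolding pure_def mem_rank_selected by metis
  then obtain u where u: "\<kappa> u = i" "\<tau> - {u} \<in> \<Delta>'" "card (\<tau> - {u}) = card C - 1"
    using facet_delete_colour by blast
  have "\<sigma> \<subseteq> \<tau> - {u}" using \<sigma> \<tau>(2) u(1) unfolding mem_rank_selected by blast
  then show "\<exists>\<tau>\<in>\<Delta>'. \<sigma> \<subseteq> \<tau> \<and> card \<tau> = card C - 1" using u by blast
qed

lemma homology_vanishes_link_rank_selected:
  fixes K :: "'k::field itself"
  assumes bs: "buchsbaum K \<Delta>" and F: "F \<in> \<Delta>'" "F \<noteq> {}" and n: "n < dim_card \<Delta>' - card F"
  shows "homology_vanishes K (link \<Delta>' F) n"
proof -
  have F\<Delta>: "F \<in> \<Delta>" and Fi: "\<forall>u\<in>F. \<kappa> u \<noteq> i" using F(1) unfolding mem_rank_selected by auto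
  have n': "n < card C - 1 - card F" using n dim_card_rank_selected by simp
  have "link \<Delta>' F = delete_vertices (link \<Delta> F) {v. \<kappa> v = i}"
    using Fi unfolding link_def delete_vertices_def mem_rank_selected by auto
  also have "homology_vanishes K \<dots> n"
  proof (rule homology_vanishes_delete_vertices[OF simplicial_complex_link[OF sc]])
    show "u = w" if "\<sigma> \<in> link \<Delta> F" "u \<in> \<sigma>" "w \<in> \<sigma>" "u \<in> {v. \<kappa> v = i}" "w \<in> {v. \<kappa> v = i}"
      for \<sigma> u w
      using that colour_unique[of \<sigma> u w] unfolding link_def by auto
    show "homology_vanishes K (link \<Delta> F) n"
      using buchsbaumD[OF bs F\<Delta> F(2)] n' dim by simp
  next
    fix v assume "v \<in> {v. \<kappa> v = i}"
    then have vF: "v \<notin> F" using Fi by auto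
    show "homology_vanishes K (link (link \<Delta> F) {v}) n"
    proof (cases "insert v F \<in> \<Delta>")
      case True
      have "card (insert v F) = Suc (card F)"
        using vF simplicial_complex_finite_face[OF sc F\<Delta>] by simp
      then show ?thesis
        unfolding link_insert[OF sc vF] using buchsbaumD[OF bs True] n' dim by simp
    next
      case False
      show ?thesis
        unfolding link_insert[OF sc vF] link_eq_empty[OF sc False] by (rule homology_vanishes_empty)
    qed
  qed
  finally show ?thesis .
qed

lemma cycle_extending_starE:
  fixes K :: "'k::field itself" and b :: "'v set \<Rightarrow> 'k"
  assumes bs: "buchsbaum_star K \<Delta>" and G: "G \<noteq> {}" and b: "chain_on \<Delta> (card C) b"
    and star: "\<And>\<tau>. \<tau> \<in> \<Delta> \<Longrightarrow> G \<subseteq> \<tau> \<Longrightarrow> boundary \<Delta> b \<tau> = 0"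
  obtains c where "rel_cycle K \<Delta> {} (card C) c" "\<And>\<tau>. G \<subseteq> \<tau> \<Longrightarrow> c \<tau> = b \<tau>"
proof (cases "G \<in> \<Delta>")
  case True
  obtain c where c: "rel_cycle K \<Delta> {} (card C) c"
    and cb: "\<And>\<tau>. \<tau> \<notin> cost \<Delta> G \<Longrightarrow> c \<tau> = (if G \<subseteq> \<tau> then b \<tau> else 0)"
    using buchsbaum_starD[OF bs True G] card_face_le rel_cycle_restrict_star[OF sc b star]
    unfolding dim by (elim homology_map_surj_top_degreeE) auto
  have "c \<tau> = b \<tau>" if "G \<subseteq> \<tau>" for \<tau>
  proof (cases "\<tau> \<in> \<Delta>")
    case True
    then show ?thesis using cb[of \<tau>] that unfolding cost_def by simp
  next
    case False
    have "c \<tau> = 0" using c False unfolding rel_cycle_def chain_on_def by blast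
    moreover have "b \<tau> = 0" using chain_onD[OF b] False by blast
    ultimately show ?thesis by simp
  qed
  with c show thesis by (rule that)
next
  case False
  have "b \<tau> = 0" if "G \<subseteq> \<tau>" for \<tau>
    using chain_onD[OF b] simplicial_complexD[OF sc _ that] False by blast
  then show thesis
    by (intro that[of "\<lambda>_. 0"]) (auto simp: rel_cycle_def chain_on_def)
qed

lemma Suc_card_minus_one: "Suc (card C - 1) = card C"
proof -
  have "card C > 0" using i finite_C card_gt_0_iff by blast
  then show ?thesis by simp
qed

lemma rel_boundary_of_rank_selected_cycle:
  fixes K :: "'k::field itself"
  assumes bs: "buchsbaum K \<Delta>" and F: "F \<in> \<Delta>'" "F \<noteq> {}"
    and z: "rel_cycle K \<Delta>' (cost \<Delta>' F) (card C - 1) z"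
  shows "rel_boundary K \<Delta> (cost \<Delta> F) (card C - 1) z"
proof (rule rel_boundary_if_link_vanishes[OF sc])
  show F\<Delta>: "F \<in> \<Delta>" using F(1) unfolding mem_rank_selected by blast
  show "card F \<le> card C - 1" using card_rank_selected_face_le[OF F(1)] .
  then show "homology_vanishes K (link \<Delta> F) (card C - 1 - card F)"
    using Suc_card_minus_one by (intro buchsbaumD[OF bs F\<Delta> F(2)]) (simp add: dim)
  show "rel_cycle K \<Delta> (cost \<Delta> F) (card C - 1) z"
    by (rule rel_cycle_cost_subcomplex[OF simplicial_complex_finite_vertices[OF sc] _ z])
      (auto simp: rank_selected_def)
qed

text \<open>Every facet meets the colour class, so off it the boundary of a top chain consists of
  contractions at vertices of that colour only.\<close>

lemma boundary_in_top_chain: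
  assumes b: "chain_on \<Delta> (card C) b" and \<tau>: "\<tau> \<in> \<Delta>'" "F \<subseteq> \<tau>"
    and cb: "\<And>v \<sigma>. \<kappa> v = i \<Longrightarrow> insert v F \<subseteq> \<sigma> \<Longrightarrow> c v \<sigma> = b \<sigma>"
  shows "boundary_in (\<Union>\<Delta>) b \<tau> = (\<Sum>v\<in>\<Union>\<Delta> \<inter> {v. \<kappa> v = i}. contract (c v) v \<tau>)"
proof -
  have \<tau>W: "\<tau> \<inter> {v. \<kappa> v = i} = {}" using \<tau>(1) unfolding mem_rank_selected by blast
  have "(\<lambda>\<sigma>. if \<sigma> \<inter> {v. \<kappa> v = i} = {} then b \<sigma> else 0) = (\<lambda>_. 0)"
  proof
    fix \<sigma> show "(if \<sigma> \<inter> {v. \<kappa> v = i} = {} then b \<sigma> else 0) = 0"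
      using chain_onD[OF b, of \<sigma>] facet_meets_colour[of \<sigma>] by auto
  qed
  then have "boundary_in (\<Union>\<Delta>) b \<tau> = (\<Sum>v\<in>\<Union>\<Delta> \<inter> {v. \<kappa> v = i}. contract b v \<tau>)"
    using boundary_in_split[OF simplicial_complex_finite_vertices[OF sc] \<tau>W, of b]
    by (simp add: boundary_in_eq_zero)
  also have "\<dots> = (\<Sum>v\<in>\<Union>\<Delta> \<inter> {v. \<kappa> v = i}. contract (c v) v \<tau>)"
  proof (rule sum.cong)
    fix v assume "v \<in> \<Union>\<Delta> \<inter> {v. \<kappa> v = i}"
    then have "\<kappa> v = i" "v \<notin> \<tau>" using \<tau>W by auto
    moreover have "insert v F \<subseteq> insert v \<tau>" using \<tau>(2) by blast
    ultimately show "contract b v \<tau> = contract (c v) v \<tau>" unfolding contract_def using cb by simp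
  qed simp
  finally show ?thesis .
qed

lemma star_cycles_exist:
  fixes K :: "'k::field itself" and b :: "'v set \<Rightarrow> 'k"
  assumes bs: "buchsbaum_star K \<Delta>" and b: "chain_on \<Delta> (card C) b"
    and star: "\<And>\<tau>. \<tau> \<in> \<Delta> \<Longrightarrow> F \<subseteq> \<tau> \<Longrightarrow> \<tau> \<notin> \<Delta>' \<Longrightarrow> boundary \<Delta> b \<tau> = 0"
  shows "\<exists>c. \<forall>v. \<kappa> v = i \<longrightarrow> rel_cycle K \<Delta> {} (card C) (c v) \<and> (\<forall>\<tau>. insert v F \<subseteq> \<tau> \<longrightarrow> c v \<tau> = b \<tau>)"
proof (rule choice, intro allI, cases)
  fix v assume v: "\<kappa> v = i"
  have "boundary \<Delta> b \<tau> = 0" if "\<tau> \<in> \<Delta>" "insert v F \<subseteq> \<tau>" for \<tau>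
    using star that v unfolding mem_rank_selected by auto
  then obtain c where "rel_cycle K \<Delta> {} (card C) c" "\<And>\<tau>. insert v F \<subseteq> \<tau> \<Longrightarrow> c \<tau> = b \<tau>"
    using cycle_extending_starE[OF bs insert_not_empty b] by blast
  then show "\<exists>c. \<kappa> v = i \<longrightarrow> rel_cycle K \<Delta> {} (card C) c \<and> (\<forall>\<tau>. insert v F \<subseteq> \<tau> \<longrightarrow> c \<tau> = b \<tau>)"
    by blast
qed blast

lemma homology_map_surj_rank_selected:
  fixes K :: "'k::field itself"
  assumes bs: "buchsbaum_star K \<Delta>" and F: "F \<in> \<Delta>'" "F \<noteq> {}"
  shows "homology_map_surj K \<Delta>' (cost \<Delta>' F) (dim_card \<Delta>')"
  unfolding homology_map_surj_def dim_card_rank_selected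
proof (intro allI impI)
  let ?V = "\<Union>\<Delta>" and ?n = "card C - 1" and ?W = "{v. \<kappa> v = i}"
  fix z :: "'v set \<Rightarrow> 'k" assume z: "rel_cycle K \<Delta>' (cost \<Delta>' F) ?n z"
  then have zsupp: "z \<sigma> \<noteq> 0 \<Longrightarrow> \<sigma> \<in> \<Delta>'" for \<sigma>
    unfolding rel_cycle_def chain_on_def by blast
  have "rel_boundary K \<Delta> (cost \<Delta> F) ?n z"
    using bs unfolding buchsbaum_star_def by (intro rel_boundary_of_rank_selected_cycle[OF _ F z]) simp
  then obtain b where b: "chain_on (\<Delta> - cost \<Delta> F) (card C) b"
    and zb: "\<And>\<tau>. \<tau> \<notin> cost \<Delta> F \<Longrightarrow> z \<tau> = boundary \<Delta> b \<tau>"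
    unfolding rel_boundary_def Suc_card_minus_one by blast
  have b\<Delta>: "chain_on \<Delta> (card C) b" using b unfolding chain_on_def by blast
  have star: "boundary \<Delta> b \<tau> = 0" if "\<tau> \<in> \<Delta>" "F \<subseteq> \<tau>" "\<tau> \<notin> \<Delta>'" for \<tau>
    using zb[of \<tau>] zsupp[of \<tau>] that unfolding cost_def by auto
  have "\<exists>c. \<forall>v. \<kappa> v = i \<longrightarrow> rel_cycle K \<Delta> {} (card C) (c v)
      \<and> (\<forall>\<tau>. insert v F \<subseteq> \<tau> \<longrightarrow> c v \<tau> = b \<tau>)"
    by (rule star_cycles_exist[OF bs b\<Delta>]) (rule star)
  then obtain c where "\<forall>v. \<kappa> v = i \<longrightarrow> rel_cycle K \<Delta> {} (card C) (c v)
      \<and> (\<forall>\<tau>. insert v F \<subseteq> \<tau> \<longrightarrow> c v \<tau> = b \<tau>)"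
    by (elim exE)
  then have c: "\<And>v. \<kappa> v = i \<Longrightarrow> rel_cycle K \<Delta> {} (card C) (c v)"
    and cb: "\<And>v \<tau>. \<kappa> v = i \<Longrightarrow> insert v F \<subseteq> \<tau> \<Longrightarrow> c v \<tau> = b \<tau>"
    by blast+
  define y where "y \<rho> = (\<Sum>v\<in>?V \<inter> ?W. contract (c v) v \<rho>)" for \<rho>
  show "\<exists>y. rel_cycle K \<Delta>' {} ?n y \<and>
      rel_boundary K \<Delta>' (cost \<Delta>' F) ?n (\<lambda>\<tau>. if \<tau> \<in> cost \<Delta>' F then 0 else z \<tau> - y \<tau>)"
  proof (intro exI conjI)
    show "rel_cycle K \<Delta>' {} ?n y"
      unfolding y_def rank_selected_eq_delete_vertices
    proof (rule rel_cycle_sum_contract[OF sc])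
      show "u = w" if "\<sigma> \<in> \<Delta>" "u \<in> \<sigma>" "w \<in> \<sigma>" "u \<in> ?W" "w \<in> ?W" for \<sigma> u w
        using colour_unique[OF that(1-3)] that(4,5) by simp
      show "rel_cycle K \<Delta> {} (Suc ?n) (c v)" if "v \<in> ?W" for v
        using c[of v] that Suc_card_minus_one by simp
    qed
    then have ysupp: "y \<rho> \<noteq> 0 \<Longrightarrow> \<rho> \<in> \<Delta>'" for \<rho>
      unfolding rel_cycle_def chain_on_def by blast
    have "z \<tau> = y \<tau>" if \<tau>: "\<tau> \<notin> cost \<Delta>' F" for \<tau>
    proof (cases "\<tau> \<in> \<Delta>'")
      case True
      then have "F \<subseteq> \<tau>" "\<tau> \<notin> cost \<Delta> F"
        using \<tau> unfolding mem_rank_selected cost_def by auto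
      have "z \<tau> = boundary_in ?V b \<tau>"
        using zb[OF \<open>\<tau> \<notin> cost \<Delta> F\<close>] chain_onD[OF b\<Delta>]
        by (simp add: boundary_eq_boundary_in[OF simplicial_complex_finite_vertices[OF sc]])
      also have "\<dots> = y \<tau>"
        unfolding y_def using boundary_in_top_chain[OF b\<Delta> True \<open>F \<subseteq> \<tau>\<close>] cb by blast
      finally show ?thesis .
    next
      case False
      then show ?thesis using zsupp ysupp by metis
    qed
    then show "rel_boundary K \<Delta>' (cost \<Delta>' F) ?n (\<lambda>\<tau>. if \<tau> \<in> cost \<Delta>' F then 0 else z \<tau> - y \<tau>)"
      unfolding rel_boundary_def chain_on_def by (intro exI[of _ "\<lambda>_. 0"]) simp
  qed
qed

lemma buchsbaum_star_rank_selected: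
  fixes K :: "'k::field itself"
  assumes bs: "buchsbaum_star K \<Delta>"
  shows "buchsbaum_star K \<Delta>'"
proof -
  have bsB: "buchsbaum K \<Delta>" using bs unfolding buchsbaum_star_def by simp
  obtain \<sigma> where "\<sigma> \<in> \<Delta>" using nonempty by blast
  then have "{} \<in> \<Delta>'"
    using simplicial_complexD[OF sc] unfolding mem_rank_selected by blast
  moreover have "pure \<Delta>'" using bsB by (intro pure_rank_selected) (simp add: buchsbaum_def)
  ultimately have "buchsbaum K \<Delta>'"
    unfolding buchsbaum_def using homology_vanishes_link_rank_selected[OF bsB] by auto
  then show ?thesis
    unfolding buchsbaum_star_def using homology_map_surj_rank_selected[OF bs] by auto
qed

end

lemma colour_deletion_delete_vertices:
  assumes "colour_deletion \<Delta> \<kappa> C i" "dim_card (delete_vertices \<Delta> A) = card C"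
    "delete_vertices \<Delta> A \<noteq> {}"
  shows "colour_deletion (delete_vertices \<Delta> A) \<kappa> C i"
proof -
  interpret colour_deletion \<Delta> \<kappa> C i by (rule assms(1))
  show ?thesis
  proof
    show "\<forall>v\<in>vertices (delete_vertices \<Delta> A). \<kappa> v \<in> C"
      using colours vertices_delete_vertices_subset by (meson subsetD)
    show "\<forall>u v. {u, v} \<in> delete_vertices \<Delta> A \<and> u \<noteq> v \<longrightarrow> \<kappa> u \<noteq> \<kappa> v"
      using proper unfolding delete_vertices_def by simp
  qed (fact simplicial_complex_delete_vertices[OF sc] finite_C assms(2) i assms(3))+
qed

lemma (in colour_deletion) m_buchsbaum_star_rank_selected:
  fixes K :: "'k::field itself"
  assumes m: "0 < m" and mb: "m_buchsbaum_star K m \<Delta>"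
  shows "m_buchsbaum_star K m \<Delta>'"
  unfolding m_buchsbaum_star_def
proof (intro conjI allI impI)
  have del: "buchsbaum_star K (delete_vertices \<Delta> A) \<and> dim_card (delete_vertices \<Delta> A) = dim_card \<Delta>"
    if "A \<subseteq> vertices \<Delta>" "card A < m" for A
    using mb[unfolded m_buchsbaum_star_def, THEN conjunct2, rule_format, OF conjI[OF that]] .
  have "buchsbaum_star K \<Delta>" using del[of "{}"] m by simp
  then have "buchsbaum_star K \<Delta>'" by (rule buchsbaum_star_rank_selected)
  then show "buchsbaum K \<Delta>'" unfolding buchsbaum_star_def by simp
  fix A assume A: "A \<subseteq> vertices \<Delta>' \<and> card A < m"
  then have "A \<subseteq> vertices \<Delta>" using vertices_rank_selected_subset[of \<Delta> \<kappa> "C - {i}"] by auto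
  then have bsA: "buchsbaum_star K (delete_vertices \<Delta> A)"
    and dimA: "dim_card (delete_vertices \<Delta> A) = card C"
    using del[OF _ conjunct2[OF A]] dim by simp_all
  then have "delete_vertices \<Delta> A \<noteq> {}" unfolding buchsbaum_star_def buchsbaum_def by simp
  then interpret A: colour_deletion "delete_vertices \<Delta> A" \<kappa> C i
    by (rule colour_deletion_delete_vertices[OF colour_deletion_axioms dimA])
  show "buchsbaum_star K (delete_vertices \<Delta>' A)"
    using A.buchsbaum_star_rank_selected[OF bsA] by (simp add: rank_selected_delete_vertices)
  show "dim_card (delete_vertices \<Delta>' A) = dim_card \<Delta>'"
    using A.dim_card_rank_selected dim_card_rank_selected by (simp add: rank_selected_delete_vertices)
qed

section \<open>Rank selection\<close>

lemma m_buchsbaum_star_rank_selected_Diff: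
  fixes K :: "'k::field itself" and \<Delta> :: "'v::linorder set set"
  assumes sc: "simplicial_complex \<Delta>" and finite_C: "finite C" and dim: "dim_card \<Delta> = card C"
    and colours: "\<forall>v\<in>vertices \<Delta>. \<kappa> v \<in> C"
    and proper: "\<forall>u v. {u, v} \<in> \<Delta> \<and> u \<noteq> v \<longrightarrow> \<kappa> u \<noteq> \<kappa> v"
    and m: "0 < m" and mb: "m_buchsbaum_star K m \<Delta>"
    and R: "finite R" "R \<subseteq> C"
  shows "m_buchsbaum_star K m (rank_selected \<Delta> \<kappa> (C - R)) \<and> dim_card (rank_selected \<Delta> \<kappa> (C - R)) = card (C - R)"
  using R
proof (induction R rule: finite_induct)
  case empty
  have "\<kappa> ` \<sigma> \<subseteq> C" if "\<sigma> \<in> \<Delta>" for \<sigma>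
    using colours that unfolding vertices_def by blast
  then have "rank_selected \<Delta> \<kappa> C = \<Delta>" unfolding rank_selected_def by blast
  then show ?case using mb dim by simp
next
  case (insert j R)
  let ?T = "C - R"
  have IH: "m_buchsbaum_star K m (rank_selected \<Delta> \<kappa> ?T)" "dim_card (rank_selected \<Delta> \<kappa> ?T) = card ?T"
    using insert by auto
  have "rank_selected \<Delta> \<kappa> ?T \<noteq> {}"
    using IH(1) unfolding m_buchsbaum_star_def buchsbaum_def by blast
  moreover have "\<forall>v\<in>vertices (rank_selected \<Delta> \<kappa> ?T). \<kappa> v \<in> ?T"
    unfolding vertices_def rank_selected_def by blast
  moreover have "\<forall>u v. {u, v} \<in> rank_selected \<Delta> \<kappa> ?T \<and> u \<noteq> v \<longrightarrow> \<kappa> u \<noteq> \<kappa> v"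
    using proper unfolding rank_selected_def by simp
  moreover have "j \<in> ?T" using insert by auto
  ultimately interpret colour_deletion "rank_selected \<Delta> \<kappa> ?T" \<kappa> ?T j
    using simplicial_complex_rank_selected[OF sc] finite_C IH(2) by unfold_locales auto
  have Tj: "?T - {j} = C - insert j R" by blast
  have rank: "rank_selected (rank_selected \<Delta> \<kappa> ?T) \<kappa> (C - insert j R) = rank_selected \<Delta> \<kappa> (C - insert j R)"
    by (rule rank_selected_rank_selected) blast
  have card: "card (C - insert j R) = card ?T - 1"
    using \<open>j \<in> ?T\<close> finite_C unfolding Tj[symmetric] by simp
  show ?case
    using m_buchsbaum_star_rank_selected[OF m IH(1)] dim_card_rank_selected card
    unfolding Tj rank by simp
qed

theorem mainTheorem3:
  fixes K :: "'k::field itself" and \<Delta> :: "'v::linorder set set" and \<kappa> :: "'v \<Rightarrow> nat"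
    and m d :: nat and S :: "nat set"
  assumes "0 < m"
    and "simplicial_complex \<Delta>"
    and "dim_card \<Delta> = d"
    and "balanced \<Delta> d \<kappa>"
    and "m_buchsbaum_star K m \<Delta>"
    and "S \<subseteq> {1..d}" and "S \<noteq> {}" and "S \<noteq> {1..d}"
  shows "m_buchsbaum_star K m (rank_selected \<Delta> \<kappa> S)"
proof -
  have dim: "dim_card \<Delta> = card {1..d}" using assms(3) by simp
  have colours: "\<forall>v\<in>vertices \<Delta>. \<kappa> v \<in> {1..d}"
    and proper: "\<forall>u v. {u, v} \<in> \<Delta> \<and> u \<noteq> v \<longrightarrow> \<kappa> u \<noteq> \<kappa> v"
    using assms(4) unfolding balanced_def by blast+
  have "{1..d} - ({1..d} - S) = S" using assms(6) by blast
  then show ?thesis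
    using m_buchsbaum_star_rank_selected_Diff[OF assms(2) finite_atLeastAtMost dim colours proper
        assms(1,5), of "{1..d} - S"]
    by simp
qed

end
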